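(* Let $(\mu_n)_{n\ge0}$ be complex numbers with $\mu_0=1$, let $M(z)=\sum_{n\ge0}\mu_nz^n$, let $(h_n)_{n\ge1}$ be its boolean cumulants and $(c_n)_{n\ge1}$ its free cumulants. Then for every $n\ge 2$, $$c_n=\sum_{r=1}^{n-1}\ \sum_{\substack{i_1+\dots+i_r=n\\ i_j\ge1}}\frac{(-1)^{r-1}}{n-1}\binom{n-1}{r}\,h_{i_1}h_{i_2}\cdots h_{i_r},$$ where the inner sum is over ordered tuples $(i_1,\dots,i_r)$ of positive integers summing to $n$. *)

theory Defs
  imports Complex_Main "HOL-Computational_Algebra.Formal_Power_Series"
begin

definition moment_fps :: "(nat \<Rightarrow> complex) \<Rightarrow> complex fps" where
  "moment_fps mu = Abs_fps mu"

text \<open>Boolean cumulants: H(z) = sum_{n>=1} h_n z^n with M(z) = 1/(1 - H(z)),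
  i.e. H = 1 - 1/M.\<close>
definition boolean_cumulant :: "(nat \<Rightarrow> complex) \<Rightarrow> nat \<Rightarrow> complex" where
  "boolean_cumulant mu n = fps_nth (1 - inverse (moment_fps mu)) n"

definition free_cumulant_fps :: "(nat \<Rightarrow> complex) \<Rightarrow> complex fps" where
  "free_cumulant_fps mu =
     (THE C. fps_compose C (fps_X * moment_fps mu) = moment_fps mu)"

definition free_cumulant :: "(nat \<Rightarrow> complex) \<Rightarrow> nat \<Rightarrow> complex" where
  "free_cumulant mu n = fps_nth (free_cumulant_fps mu) n"

end

theory Submission
  imports Defs
begin

text \<open>
  Put G = z M(z) and \<psi> = 1/M. The defining relation M = C(G) together with G \<psi> = z is the
  setting of Lagrange inversion, which in residue form reads [z^(n-1)] (C \<circ> G)' \<psi>^n = n c_n.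
  Since M' \<psi>^2 = -\<psi>', the left-hand side is -[z^(n-1)] \<psi>' \<psi>^(n-2) = -n/(n-1) [z^n] \<psi>^(n-1),
  so (n - 1) c_n = -[z^n] \<psi>^(n-1). Finally \<psi> = 1 - H for the boolean cumulant series H;
  expanding (1 - H)^(n-1) binomially and each H^r over compositions of n gives the formula.
\<close>

unbundle fps_syntax

definition compositions :: "nat \<Rightarrow> nat \<Rightarrow> nat list set" where
  "compositions n r = {is. length is = r \<and> (\<forall>i\<in>set is. i \<ge> 1) \<and> sum_list is = n}"

lemma fps_power_nth_natpermute:
  fixes H :: "'a::comm_ring_1 fps"
  shows "(H ^ r) $ n = (\<Sum>v\<in>natpermute n r. prod_list (map (fps_nth H) v))"
proof (cases r)
  case 0
  have "natpermute n 0 = (if n = 0 then {[]} else {})"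
    by (auto simp: natpermute_def)
  with 0 show ?thesis by simp
next
  case (Suc m)
  have "(H ^ r) $ n = (\<Sum>v\<in>natpermute n r. \<Prod>j\<in>{0..<r}. H $ (v ! j))"
    unfolding Suc fps_power_nth_Suc by (simp add: atLeastLessThanSuc_atLeastAtMost)
  also have "\<dots> = (\<Sum>v\<in>natpermute n r. prod_list (map (fps_nth H) v))"
    by (intro sum.cong refl) (simp add: prod.list_conv_set_nth natpermute_def)
  finally show ?thesis .
qed

lemma fps_power_nth_compositions:
  fixes H :: "'a::comm_ring_1 fps"
  assumes H0: "H $ 0 = 0"
  shows "(H ^ r) $ n = (\<Sum>is\<in>compositions n r. prod_list (map (fps_nth H) is))"
  unfolding fps_power_nth_natpermute
proof (rule sum.mono_neutral_right)
  show "compositions n r \<subseteq> natpermute n r"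
    by (auto simp: compositions_def natpermute_def)
  show "\<forall>v\<in>natpermute n r - compositions n r. prod_list (map (fps_nth H) v) = 0"
  proof
    fix v assume "v \<in> natpermute n r - compositions n r"
    then have "0 \<in> set v" by (auto simp: compositions_def natpermute_def not_le)
    then obtain xs ys where "v = xs @ 0 # ys" by (meson split_list)
    then show "prod_list (map (fps_nth H) v) = 0" using H0 by simp
  qed
qed (rule natpermute_finite)

lemma fps_one_minus_power_nth:
  fixes H :: "'a::comm_ring_1 fps"
  assumes "n \<noteq> 0"
  shows "((1 - H) ^ p) $ n = - (\<Sum>r=1..p. (-1) ^ (r - 1) * of_nat (p choose r) * (H ^ r) $ n)"
proof -
  have "(1 - H) ^ p = (\<Sum>r\<le>p. of_nat (p choose r) * (- H) ^ r)"
    using binomial_ring[of "- H" 1 p] by simp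
  then have "((1 - H) ^ p) $ n = (\<Sum>r\<le>p. (-1) ^ r * of_nat (p choose r) * (H ^ r) $ n)"
    by (auto simp: fps_sum_nth uminus_power_if intro!: sum.cong)
  also have "\<dots> = (\<Sum>r\<in>{1..p}. (-1) ^ r * of_nat (p choose r) * (H ^ r) $ n)"
    using assms by (intro sum.mono_neutral_right) (auto simp: not_le)
  also have "\<dots> = - (\<Sum>r=1..p. (-1) ^ (r - 1) * of_nat (p choose r) * (H ^ r) $ n)"
    by (auto simp: sum_negf[symmetric] power_eq_if intro!: sum.cong)
  finally show ?thesis .
qed

lemma fps_deriv_mult_power_nth:
  fixes f :: "'a::comm_ring_1 fps"
  shows "of_nat (Suc p) * (fps_deriv f * f ^ p) $ j = of_nat (Suc j) * (f ^ Suc p) $ Suc j"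
proof -
  have "of_nat (Suc p) * (fps_deriv f * f ^ p) = fps_deriv (f ^ Suc p)"
    using fps_deriv_power'[of f "Suc p"] by (simp add: mult.assoc)
  then have "of_nat (Suc p) * (fps_deriv f * f ^ p) $ j = fps_deriv (f ^ Suc p) $ j"
    by (simp only: fps_mult_of_nat_nth(1)[symmetric])
  then show ?thesis
    unfolding fps_deriv_nth by simp
qed

text \<open>With \<psi> standing for z/G, this says that G'/G^(m+1) has residue 1 for m = 0 and 0 otherwise.\<close>

lemma fps_deriv_mult_power_nth_residue:
  fixes G psi :: "'a::{idom,ring_char_0} fps"
  assumes G0: "G $ 0 = 0" and Gpsi: "G * psi = fps_X"
  shows "(fps_deriv G * psi ^ Suc m) $ m = (if m = 0 then 1 else 0)"
proof -
  have deriv: "fps_deriv G * psi + G * fps_deriv psi = 1"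
    using arg_cong[OF Gpsi, of fps_deriv] by (simp add: add.commute)
  show ?thesis
  proof (cases m)
    case 0
    then show ?thesis using arg_cong[OF deriv, of "\<lambda>f. f $ 0"] G0 by simp
  next
    case (Suc k)
    have "fps_deriv G * psi ^ Suc m = psi ^ m * (fps_deriv G * psi)"
      by (simp add: mult_ac)
    also have "\<dots> = psi ^ m * (1 - G * fps_deriv psi)"
      using deriv by (simp add: eq_diff_eq)
    also have "\<dots> = psi ^ m - (G * psi) * (fps_deriv psi * psi ^ k)"
      by (simp add: Suc algebra_simps)
    finally have "fps_deriv G * psi ^ Suc m = psi ^ m - (G * psi) * (fps_deriv psi * psi ^ k)" .
    then have "(fps_deriv G * psi ^ Suc m) $ m = (psi ^ m) $ m - (fps_X * (fps_deriv psi * psi ^ k)) $ m"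
      by (simp only: Gpsi fps_sub_nth)
    moreover have "(fps_X * (fps_deriv psi * psi ^ k)) $ m = (psi ^ m) $ m"
    proof -
      have "of_nat (Suc k) * (fps_deriv psi * psi ^ k) $ k = of_nat (Suc k) * (psi ^ Suc k) $ Suc k"
        by (rule fps_deriv_mult_power_nth)
      moreover have "of_nat (Suc k) \<noteq> (0 :: 'a)"
        by (rule of_nat_neq_0)
      ultimately show ?thesis
        using Suc by simp
    qed
    ultimately show ?thesis
      using Suc by (simp add: right_diff_distrib)
  qed
qed

lemma fps_compose_mult_nth:
  fixes B G F :: "'a::comm_ring_1 fps"
  assumes G0: "G $ 0 = 0"
  shows "((B oo G) * F) $ n = (\<Sum>i=0..n. B $ i * (G ^ i * F) $ n)"
proof -
  have "((B oo G) * F) $ n = (\<Sum>j=0..n. \<Sum>i=0..j. B $ i * (G ^ i) $ j * F $ (n - j))"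
    by (simp add: fps_mult_nth fps_compose_nth sum_distrib_right)
  also have "\<dots> = (\<Sum>j=0..n. \<Sum>i=0..n. B $ i * (G ^ i) $ j * F $ (n - j))"
    by (intro sum.cong refl sum.mono_neutral_left)
       (auto simp: startsby_zero_power_prefix[OF G0])
  also have "\<dots> = (\<Sum>i=0..n. B $ i * (G ^ i * F) $ n)"
    by (subst sum.swap) (simp add: fps_mult_nth sum_distrib_left mult.assoc)
  finally show ?thesis .
qed

lemma fps_compose_deriv_mult_power_nth:
  fixes A G psi :: "'a::{idom,ring_char_0} fps"
  assumes G0: "G $ 0 = 0" and Gpsi: "G * psi = fps_X"
  shows "(fps_deriv (A oo G) * psi ^ Suc n) $ n = of_nat (Suc n) * A $ Suc n"
proof -
  have residue: "(G ^ i * (fps_deriv G * psi ^ Suc n)) $ n = (if i = n then 1 else 0)"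
    if "i \<le> n" for i
  proof -
    have "G ^ i * (fps_deriv G * psi ^ Suc n) = (G * psi) ^ i * (fps_deriv G * psi ^ Suc (n - i))"
      using that by (simp add: power_mult_distrib power_add[symmetric] mult_ac Suc_diff_le)
    also have "\<dots> = fps_X ^ i * (fps_deriv G * psi ^ Suc (n - i))"
      by (simp only: Gpsi)
    finally have "(G ^ i * (fps_deriv G * psi ^ Suc n)) $ n = (fps_deriv G * psi ^ Suc (n - i)) $ (n - i)"
      using that by (simp only: fps_X_power_mult_nth not_less[symmetric] if_False)
    also have "\<dots> = (if n - i = 0 then 1 else 0)"
      by (rule fps_deriv_mult_power_nth_residue[OF G0 Gpsi])
    finally show ?thesis
      using that by simp
  qed
  have "(fps_deriv (A oo G) * psi ^ Suc n) $ n = ((fps_deriv A oo G) * (fps_deriv G * psi ^ Suc n)) $ n"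
    by (simp add: fps_compose_deriv[OF G0] mult.assoc)
  also have "\<dots> = (\<Sum>i=0..n. fps_deriv A $ i * (if i = n then 1 else 0))"
    unfolding fps_compose_mult_nth[OF G0] by (intro sum.cong refl) (simp only: residue atLeastAtMost_iff)
  also have "\<dots> = of_nat (Suc n) * A $ Suc n"
    by (simp add: mult_delta_right)
  finally show ?thesis .
qed

lemma fps_compose_eq_iff_eq_compose_fps_inv:
  fixes C G M :: "'a::field fps"
  assumes G0: "G $ 0 = 0" and G1: "G $ 1 \<noteq> 0"
  shows "C oo G = M \<longleftrightarrow> C = M oo fps_inv G"
proof -
  have inv0: "fps_inv G $ 0 = 0"
    by (simp add: fps_inv_def)
  show ?thesis
  proof
    assume "C oo G = M"
    then have "M oo fps_inv G = C oo (G oo fps_inv G)"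
      by (simp add: fps_compose_assoc[OF inv0 G0])
    then show "C = M oo fps_inv G"
      by (simp add: fps_inv_right[OF G0 G1])
  next
    assume "C = M oo fps_inv G"
    then show "C oo G = M"
      by (simp add: fps_compose_assoc[OF G0 inv0, symmetric] fps_inv[OF G0 G1])
  qed
qed

lemma free_cumulant_fps_compose:
  assumes "mu 0 = 1"
  shows "free_cumulant_fps mu oo (fps_X * moment_fps mu) = moment_fps mu"
proof -
  let ?G = "fps_X * moment_fps mu"
  have G0: "?G $ 0 = 0" and G1: "?G $ 1 \<noteq> 0"
    using assms by (simp_all add: moment_fps_def)
  have "free_cumulant_fps mu = moment_fps mu oo fps_inv ?G"
    unfolding free_cumulant_fps_def fps_compose_eq_iff_eq_compose_fps_inv[OF G0 G1] by simp
  then show ?thesis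
    using fps_compose_eq_iff_eq_compose_fps_inv[OF G0 G1] by simp
qed

lemma free_cumulant_eq_inverse_moment_power_nth:
  assumes mu0: "mu 0 = 1" and n: "n \<ge> 2"
  shows "of_nat (n - 1) * free_cumulant mu n = - (inverse (moment_fps mu) ^ (n - 1) $ n)"
proof -
  obtain m where n_eq: "n = Suc (Suc m)"
    using n by (metis add_2_eq_Suc le_Suc_ex)
  define M where "M = moment_fps mu"
  define psi where "psi = inverse M"
  have Mpsi: "M * psi = 1"
    using mu0 by (simp add: psi_def M_def moment_fps_def inverse_mult_eq_1')
  have deriv: "fps_deriv M * psi = - (M * fps_deriv psi)"
    using arg_cong[OF Mpsi, of fps_deriv] by (simp add: eq_neg_iff_add_eq_0 add.commute)
  have "of_nat n * free_cumulant mu n = (fps_deriv M * psi ^ n) $ Suc m"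
    using fps_compose_deriv_mult_power_nth[of "fps_X * M" psi "free_cumulant_fps mu" "Suc m"]
      free_cumulant_fps_compose[of mu, OF mu0] Mpsi
    by (simp add: n_eq M_def free_cumulant_def mult.assoc)
  also have "fps_deriv M * psi ^ n = - (fps_deriv psi * psi ^ m)"
  proof -
    have "fps_deriv M * psi ^ n = (fps_deriv M * psi) * psi * psi ^ m"
      by (simp add: n_eq mult_ac)
    also have "\<dots> = - ((M * psi) * (fps_deriv psi * psi ^ m))"
      unfolding deriv by (simp add: mult_ac)
    finally show ?thesis
      by (simp add: Mpsi)
  qed
  finally have lagrange: "of_nat n * free_cumulant mu n = - ((fps_deriv psi * psi ^ m) $ Suc m)"
    by simp
  with fps_deriv_mult_power_nth[of m psi "Suc m"]
  have "of_nat n * (of_nat (n - 1) * free_cumulant mu n) = of_nat n * - (psi ^ (n - 1) $ n)"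
    by (simp add: n_eq algebra_simps)
  moreover have "of_nat n \<noteq> (0 :: complex)"
    using n by simp
  ultimately show ?thesis
    unfolding psi_def M_def using mult_left_cancel by blast
qed

theorem mainTheorem2:
  fixes mu :: "nat \<Rightarrow> complex" and n :: nat
  assumes "mu 0 = 1" and "n \<ge> 2"
  shows "free_cumulant mu n =
    (\<Sum>r\<in>{1..n-1}. \<Sum>is\<in>{is :: nat list. length is = r \<and> (\<forall>i\<in>set is. i \<ge> 1) \<and> sum_list is = n}.
       ((-1) ^ (r - 1) / of_nat (n - 1) * of_nat ((n - 1) choose r)) *
       prod_list (map (boolean_cumulant mu) is))"
proof -
  define H where "H = 1 - inverse (moment_fps mu)"
  have H0: "H $ 0 = 0"
    using assms(1) by (simp add: H_def moment_fps_def)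
  have boolean: "boolean_cumulant mu = fps_nth H"
    by (simp add: fun_eq_iff boolean_cumulant_def H_def)
  have "of_nat (n - 1) * free_cumulant mu n = - ((1 - H) ^ (n - 1) $ n)"
    using free_cumulant_eq_inverse_moment_power_nth[of mu, OF assms] by (simp add: H_def)
  also have "\<dots> = (\<Sum>r=1..n-1. (-1) ^ (r - 1) * of_nat ((n - 1) choose r) * (H ^ r) $ n)"
    using assms(2) by (simp add: fps_one_minus_power_nth)
  finally have "free_cumulant mu n =
      (\<Sum>r=1..n-1. (-1) ^ (r - 1) * of_nat ((n - 1) choose r) * (H ^ r) $ n) / of_nat (n - 1)"
    using assms(2) by (simp add: eq_divide_eq mult.commute)
  also have "\<dots> =
      (\<Sum>r=1..n-1. ((-1) ^ (r - 1) / of_nat (n - 1) * of_nat ((n - 1) choose r)) * (H ^ r) $ n)"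
    unfolding sum_divide_distrib by (intro sum.cong refl) simp
  finally show ?thesis
    by (simp add: fps_power_nth_compositions[OF H0] compositions_def boolean sum_distrib_left)
qed

end
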